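(* A class of finite graphs has bounded clique-width (i.e., there is a constant $c$ with $\mathrm{cw}(G)\le c$ for all $G$ in the class) if and only if it has bounded multi-clique-width.
   Context: A $k$-expression is built from: atoms $i(v)$ creating a vertex $v$ with label $i\in\{1,\dots,k\}$; $\eta_{i,j}$ ($i\neq j$) adding an edge between every vertex labeled $i$ and every vertex labeled $j$; $\rho_{i\to j}$ changing every label $i$ to $j$; and $\oplus$, disjoint union. The generated graph is obtained by deleting labels. The clique-width $\mathrm{cw}(G)$ is the smallest $k$ such that $G$ is generated by a $k$-expression. A multi-$k$-expression is built as follows, where each vertex carries a (possibly empty) set of labels from $\{1,\dots,k\}$: atoms $m\langle i_1,\dots,i_\ell\rangle$ (with $m$ a positive integer and $i_1<\dots<i_\ell\le k$, possibly $\ell=0$) create $m$ vertices, each with label set $\{i_1,\dots,i_\ell\}$; $\eta_{i,j}$ creates an edge between every vertex having label $i$ and every vertex having label $j$, allowed only when no vertex has both labels $i$ and $j$; $\rho_{i\to S}$ for $S\subseteq\{1,\dots,k\}$ replaces label $i$ by the set $S$ (a vertex with label set $S'\ni i$ gets $(S'\setminus\{i\})\cup S$); $\varepsilon_i$ deletes label $i$ from all vertices; $\oplus$ is disjoint union. The generated graph is obtained by deleting all labels. The multi-clique-width $\mathrm{mcw}(G)$ is the smallest $k$ such that $G$ is generated by a multi-$k$-expression. *)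

theory Defs
  imports Main
begin

type_synonym 'a graph = "'a set \<times> ('a \<times> 'a) set"

definition finite_graph :: "'a graph \<Rightarrow> bool" where
  "finite_graph G \<longleftrightarrow> finite (fst G) \<and> snd G \<subseteq> fst G \<times> fst G
     \<and> sym (snd G) \<and> irrefl (snd G)"

datatype 'a kexp =
    KAtom nat 'a
  | KEta nat nat "'a kexp"
  | KRho nat nat "'a kexp"
  | KUnion "'a kexp" "'a kexp"

inductive kgen :: "nat \<Rightarrow> 'a kexp \<Rightarrow> 'a set \<Rightarrow> ('a \<Rightarrow> nat) \<Rightarrow> ('a \<times> 'a) set \<Rightarrow> bool"
  for k :: nat where
  katom: "1 \<le> i \<Longrightarrow> i \<le> k \<Longrightarrow> kgen k (KAtom i v) {v} (\<lambda>_. i) {}"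
| keta: "kgen k e V L E \<Longrightarrow> 1 \<le> i \<Longrightarrow> i \<le> k \<Longrightarrow> 1 \<le> j \<Longrightarrow> j \<le> k \<Longrightarrow> i \<noteq> j \<Longrightarrow>
     kgen k (KEta i j e) V L
       (E \<union> {(u, w). u \<in> V \<and> w \<in> V \<and> ((L u = i \<and> L w = j) \<or> (L u = j \<and> L w = i))})"
| krho: "kgen k e V L E \<Longrightarrow> 1 \<le> i \<Longrightarrow> i \<le> k \<Longrightarrow> 1 \<le> j \<Longrightarrow> j \<le> k \<Longrightarrow>
     kgen k (KRho i j e) V (\<lambda>v. if L v = i then j else L v) E"
| kunion: "kgen k e1 V1 L1 E1 \<Longrightarrow> kgen k e2 V2 L2 E2 \<Longrightarrow> V1 \<inter> V2 = {} \<Longrightarrow>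
     kgen k (KUnion e1 e2) (V1 \<union> V2) (\<lambda>v. if v \<in> V1 then L1 v else L2 v) (E1 \<union> E2)"

text \<open>Clique-width. The empty graph (generated by no expression) gets clique-width 0.\<close>

definition cw :: "'a graph \<Rightarrow> nat" where
  "cw G = (LEAST k. fst G = {} \<or> (\<exists>e L. kgen k e (fst G) L (snd G)))"

datatype mexp =
    MAtom nat "nat set"
  | MEta nat nat mexp
  | MRho nat "nat set" mexp
  | MEps nat mexp
  | MUnion mexp mexp

text \<open>mgen k e V L E: the multi-k-expression e is valid and evaluates to a labelled
  graph isomorphic to (V, L, E); vertices created by atoms are anonymous, so an atom
  may create any m-element set of vertices.\<close>

inductive mgen :: "nat \<Rightarrow> mexp \<Rightarrow> 'a set \<Rightarrow> ('a \<Rightarrow> nat set) \<Rightarrow> ('a \<times> 'a) set \<Rightarrow> bool"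
  for k :: nat where
  matom: "1 \<le> m \<Longrightarrow> finite V \<Longrightarrow> card V = m \<Longrightarrow> S \<subseteq> {1..k} \<Longrightarrow>
     mgen k (MAtom m S) V (\<lambda>_. S) {}"
| meta: "mgen k e V L E \<Longrightarrow> 1 \<le> i \<Longrightarrow> i \<le> k \<Longrightarrow> 1 \<le> j \<Longrightarrow> j \<le> k \<Longrightarrow>
     (\<forall>v\<in>V. \<not> (i \<in> L v \<and> j \<in> L v)) \<Longrightarrow>
     mgen k (MEta i j e) V L
       (E \<union> {(u, w). u \<in> V \<and> w \<in> V \<and> ((i \<in> L u \<and> j \<in> L w) \<or> (j \<in> L u \<and> i \<in> L w))})"
| mrho: "mgen k e V L E \<Longrightarrow> 1 \<le> i \<Longrightarrow> i \<le> k \<Longrightarrow> S \<subseteq> {1..k} \<Longrightarrow>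
     mgen k (MRho i S e) V (\<lambda>v. if i \<in> L v then (L v - {i}) \<union> S else L v) E"
| meps: "mgen k e V L E \<Longrightarrow> 1 \<le> i \<Longrightarrow> i \<le> k \<Longrightarrow>
     mgen k (MEps i e) V (\<lambda>v. L v - {i}) E"
| munion: "mgen k e1 V1 L1 E1 \<Longrightarrow> mgen k e2 V2 L2 E2 \<Longrightarrow> V1 \<inter> V2 = {} \<Longrightarrow>
     mgen k (MUnion e1 e2) (V1 \<union> V2) (\<lambda>v. if v \<in> V1 then L1 v else L2 v) (E1 \<union> E2)"

text \<open>Multi-clique-width; the empty graph gets 0.\<close>

definition mcw :: "'a graph \<Rightarrow> nat" where
  "mcw G = (LEAST k. fst G = {} \<or> (\<exists>e L. mgen k e (fst G) L (snd G)))"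

end

theory Submission
  imports Defs
begin

text \<open>A k-expression is a multi-k-expression in which every vertex carries exactly one
  label, so \<open>mcw G \<le> cw G\<close>. Conversely, a multi-k-expression is simulated by a
  k-expression whose labels are codes \<open>1..2^k\<close> of label sets: \<open>\<eta>\<^sub>i\<^sub>,\<^sub>j\<close> becomes the
  \<open>\<eta>\<close>'s between all pairs of codes of sets containing \<open>i\<close> resp. \<open>j\<close>, while \<open>\<rho>\<^sub>i\<^sub>\<rightarrow>\<^sub>S\<close> and
  \<open>\<epsilon>\<^sub>i\<close> act on codes by a map of \<open>{1..2^k}\<close> into itself, which \<open>\<rho>\<close>'s can realise
  using \<open>2^k\<close> auxiliary labels. Hence \<open>cw G \<le> 2 * 2 ^ mcw G\<close>.\<close>

lemma kgen_label_range:
  assumes "kgen k e V L E" "v \<in> V"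
  shows "1 \<le> L v \<and> L v \<le> k"
  using assms by induction auto

lemma kgen_mono:
  assumes "kgen k e V L E" "k \<le> k'"
  shows "kgen k' e V L E"
  using assms(1)
proof induction
  case (katom i v) then show ?case using assms(2) by (intro kgen.katom) auto
next
  case (keta e V L E i j) then show ?case using assms(2) by (intro kgen.keta) auto
next
  case (krho e V L E i j) then show ?case using assms(2) by (intro kgen.krho) auto
next
  case (kunion e1 V1 L1 E1 e2 V2 L2 E2) then show ?case by (intro kgen.kunion) auto
qed

fun KEtas :: "(nat \<times> nat) list \<Rightarrow> 'a kexp \<Rightarrow> 'a kexp" where
  "KEtas [] e = e"
| "KEtas ((a, b) # ps) e = KEta a b (KEtas ps e)"

lemma kgen_KEtas:
  assumes "kgen k e V L E" "\<forall>(a, b)\<in>set ps. 1 \<le> a \<and> a \<le> k \<and> 1 \<le> b \<and> b \<le> k \<and> a \<noteq> b"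
  shows "kgen k (KEtas ps e) V L (E \<union> {(u, w). u \<in> V \<and> w \<in> V \<and>
           ((L u, L w) \<in> set ps \<or> (L w, L u) \<in> set ps)})"
  using assms(2)
proof (induction ps)
  case Nil
  then show ?case using assms(1) by simp
next
  case (Cons p ps)
  obtain a b where p: "p = (a, b)" by (cases p)
  have "kgen k (KEta a b (KEtas ps e)) V L
     ((E \<union> {(u, w). u \<in> V \<and> w \<in> V \<and> ((L u, L w) \<in> set ps \<or> (L w, L u) \<in> set ps)})
      \<union> {(u, w). u \<in> V \<and> w \<in> V \<and> ((L u = a \<and> L w = b) \<or> (L u = b \<and> L w = a))})"
    by (rule keta) (use Cons p in auto)
  moreover have "(E \<union> {(u, w). u \<in> V \<and> w \<in> V \<and> ((L u, L w) \<in> set ps \<or> (L w, L u) \<in> set ps)})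
      \<union> {(u, w). u \<in> V \<and> w \<in> V \<and> ((L u = a \<and> L w = b) \<or> (L u = b \<and> L w = a))}
    = E \<union> {(u, w). u \<in> V \<and> w \<in> V \<and> ((L u, L w) \<in> set (p # ps) \<or> (L w, L u) \<in> set (p # ps))}"
    using p by auto
  ultimately show ?case using p by simp
qed

lemma kgen_edgeless:
  assumes "finite V" "V \<noteq> {}" "1 \<le> i" "i \<le> k"
  shows "\<exists>e. kgen k e V (\<lambda>_. i) {}"
  using assms(1,2)
proof (induction V rule: finite_ne_induct)
  case (singleton x)
  show ?case using katom[OF assms(3,4), of x] by blast
next
  case (insert x F)
  then obtain e where e: "kgen k e F (\<lambda>_. i) {}" by blast
  have "kgen k (KUnion (KAtom i x) e) ({x} \<union> F) (\<lambda>v. if v \<in> {x} then i else i) ({} \<union> {})"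
    by (rule kunion[OF katom[OF assms(3,4)] e]) (use insert in auto)
  then show ?case by auto
qed

fun rho_shift_up :: "nat \<Rightarrow> nat \<Rightarrow> 'a kexp \<Rightarrow> 'a kexp" where
  "rho_shift_up N 0 e = e"
| "rho_shift_up N (Suc n) e = KRho (Suc n) (Suc n + N) (rho_shift_up N n e)"

fun rho_shift_down :: "(nat \<Rightarrow> nat) \<Rightarrow> nat \<Rightarrow> nat \<Rightarrow> 'a kexp \<Rightarrow> 'a kexp" where
  "rho_shift_down f N 0 e = e"
| "rho_shift_down f N (Suc n) e = KRho (Suc n + N) (f (Suc n)) (rho_shift_down f N n e)"

lemma kgen_rho_shift_up:
  assumes "kgen K e V L E" "\<forall>v\<in>V. 1 \<le> L v \<and> L v \<le> N" "2 * N \<le> K" "n \<le> N"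
  shows "\<exists>L'. kgen K (rho_shift_up N n e) V L' E \<and>
           (\<forall>v\<in>V. L' v = (if L v \<le> n then L v + N else L v))"
  using assms(4)
proof (induction n)
  case 0
  then show ?case using assms(1,2) by (intro exI[of _ L]) auto
next
  case (Suc n)
  then obtain L' where L': "kgen K (rho_shift_up N n e) V L' E"
    "\<forall>v\<in>V. L' v = (if L v \<le> n then L v + N else L v)"
    by auto
  have "kgen K (KRho (Suc n) (Suc n + N) (rho_shift_up N n e)) V
          (\<lambda>v. if L' v = Suc n then Suc n + N else L' v) E"
    by (rule krho[OF L'(1)]) (use Suc assms in auto)
  moreover have "\<forall>v\<in>V. (if L' v = Suc n then Suc n + N else L' v)
                       = (if L v \<le> Suc n then L v + N else L v)"
    using L'(2) Suc assms(2) by auto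
  ultimately show ?case by auto
qed

lemma kgen_rho_shift_down:
  assumes "kgen K e V L0 E" "\<forall>v\<in>V. 1 \<le> L v \<and> L v \<le> N \<and> L0 v = L v + N" "2 * N \<le> K"
    "\<forall>a. 1 \<le> a \<and> a \<le> N \<longrightarrow> 1 \<le> f a \<and> f a \<le> N" "n \<le> N"
  shows "\<exists>L'. kgen K (rho_shift_down f N n e) V L' E \<and>
           (\<forall>v\<in>V. L' v = (if L v \<le> n then f (L v) else L v + N))"
  using assms(5)
proof (induction n)
  case 0
  then show ?case using assms(1,2) by (intro exI[of _ L0]) auto
next
  case (Suc n)
  then obtain L' where L': "kgen K (rho_shift_down f N n e) V L' E"
    "\<forall>v\<in>V. L' v = (if L v \<le> n then f (L v) else L v + N)"
    by auto
  have "kgen K (KRho (Suc n + N) (f (Suc n)) (rho_shift_down f N n e)) V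
          (\<lambda>v. if L' v = Suc n + N then f (Suc n) else L' v) E"
    by (rule krho[OF L'(1)]) (use Suc assms in auto)
  moreover have "\<forall>v\<in>V. (if L' v = Suc n + N then f (Suc n) else L' v)
                       = (if L v \<le> Suc n then f (L v) else L v + N)"
  proof
    fix v assume v: "v \<in> V"
    have "L v \<le> n \<Longrightarrow> f (L v) \<le> N" using assms(2,4) v by auto
    then show "(if L' v = Suc n + N then f (Suc n) else L' v)
                 = (if L v \<le> Suc n then f (L v) else L v + N)"
      using L'(2) v by (cases "L v \<le> n") (auto simp: le_Suc_eq)
  qed
  ultimately show ?case by auto
qed

text \<open>Moving all labels \<open>1..N\<close> to \<open>N+1..2N\<close> first lets every \<open>\<rho>\<close> of the second pass
  rename exactly one old label, without clashing with the labels already produced.\<close>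

lemma kgen_relabel:
  assumes "kgen K e V L E" "\<forall>v\<in>V. 1 \<le> L v \<and> L v \<le> N" "2 * N \<le> K"
    "\<forall>a. 1 \<le> a \<and> a \<le> N \<longrightarrow> 1 \<le> f a \<and> f a \<le> N"
  shows "\<exists>e' L'. kgen K e' V L' E \<and> (\<forall>v\<in>V. L' v = f (L v))"
proof -
  obtain L0 where L0: "kgen K (rho_shift_up N N e) V L0 E" "\<forall>v\<in>V. L0 v = L v + N"
    using kgen_rho_shift_up[OF assms(1,2,3) order_refl] assms(2) by auto
  have "\<forall>v\<in>V. 1 \<le> L v \<and> L v \<le> N \<and> L0 v = L v + N" using L0(2) assms(2) by auto
  from kgen_rho_shift_down[OF L0(1) this assms(3,4) order_refl] obtain L' where
    "kgen K (rho_shift_down f N N (rho_shift_up N N e)) V L' E"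
    "\<forall>v\<in>V. L' v = (if L v \<le> N then f (L v) else L v + N)"
    by auto
  then show ?thesis using assms(2) by auto
qed

lemma kgen_add_vertex:
  assumes e: "kgen k e V L E" and inj: "inj_on L V" and x: "x \<notin> V"
    and l: "1 \<le> l" "l \<le> k" "\<forall>v\<in>V. L v \<noteq> l" and N: "finite N" "N \<subseteq> V"
  shows "\<exists>e' L'. kgen k e' (insert x V) L' (E \<union> Pair x ` N \<union> (\<lambda>y. (y, x)) ` N)
                  \<and> L' x = l \<and> (\<forall>v\<in>V. L' v = L v)"
proof -
  define L1 where "L1 v = (if v \<in> V then L v else l)" for v
  have U: "kgen k (KUnion e (KAtom l x)) (V \<union> {x}) L1 (E \<union> {})"
    unfolding L1_def by (rule kunion[OF e katom[OF l(1,2)]]) (use x in auto)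
  obtain ys where ys: "set ys = N" using finite_list[OF N(1)] by blast
  define ps where "ps = map (\<lambda>y. (l, L y)) ys"
  have "\<forall>(a, b)\<in>set ps. 1 \<le> a \<and> a \<le> k \<and> 1 \<le> b \<and> b \<le> k \<and> a \<noteq> b"
    unfolding ps_def using ys N(2) l kgen_label_range[OF e] by auto
  from kgen_KEtas[OF U this] have G: "kgen k (KEtas ps (KUnion e (KAtom l x))) (V \<union> {x}) L1
      (E \<union> {} \<union> {(u, w). u \<in> V \<union> {x} \<and> w \<in> V \<union> {x} \<and>
         ((L1 u, L1 w) \<in> set ps \<or> (L1 w, L1 u) \<in> set ps)})" .
  have L1_l: "L1 u = l \<longleftrightarrow> u = x" if "u \<in> V \<union> {x}" for u
    using that x l(3) unfolding L1_def by auto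
  have L1_L: "L1 u = L y \<longleftrightarrow> u = y" if "u \<in> V \<union> {x}" "y \<in> N" for u y
    using that N(2) l(3) inj unfolding L1_def inj_on_def by auto
  have "{(u, w). u \<in> V \<union> {x} \<and> w \<in> V \<union> {x} \<and>
          ((L1 u, L1 w) \<in> set ps \<or> (L1 w, L1 u) \<in> set ps)}
        = Pair x ` N \<union> (\<lambda>y. (y, x)) ` N"
  proof -
    have "(u \<in> V \<union> {x} \<and> w \<in> V \<union> {x} \<and>
            ((L1 u, L1 w) \<in> set ps \<or> (L1 w, L1 u) \<in> set ps))
          \<longleftrightarrow> (u, w) \<in> Pair x ` N \<union> (\<lambda>y. (y, x)) ` N" for u w
    proof (cases "u \<in> V \<union> {x} \<and> w \<in> V \<union> {x}")
      case True
      then show ?thesis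
        using L1_l[of u] L1_l[of w] L1_L[of u] L1_L[of w] unfolding ps_def by (auto simp: ys)
    next
      case False
      then show ?thesis using N(2) by auto
    qed
    then show ?thesis
      unfolding set_eq_iff by (simp only: split_paired_All mem_Collect_eq prod.case simp_thms)
  qed
  moreover have "L1 x = l" "\<forall>v\<in>V. L1 v = L v" using x unfolding L1_def by auto
  moreover have "V \<union> {x} = insert x V" by simp
  ultimately show ?thesis
    using G by (intro exI[of _ "KEtas ps (KUnion e (KAtom l x))"] exI[of _ L1]) (simp add: Un_assoc)
qed

lemma kgen_exists:
  assumes "finite V" "V \<noteq> {}" "E \<subseteq> V \<times> V" "sym E" "irrefl E"
  shows "\<exists>e L. kgen (card V) e V L E \<and> inj_on L V"
  using assms
proof (induction V arbitrary: E rule: finite_ne_induct)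
  case (singleton x)
  then have "E = {}" by (auto simp: irrefl_def)
  then show ?case using katom[of 1 "card {x}" x] by auto
next
  case (insert x F)
  define EF where "EF = E \<inter> (F \<times> F)"
  define N where "N = {y \<in> F. (x, y) \<in> E}"
  have "EF \<subseteq> F \<times> F" "sym EF" "irrefl EF"
    using insert.prems unfolding EF_def sym_def irrefl_def by auto
  then obtain e L where e: "kgen (card F) e F L EF" and inj: "inj_on L F"
    using insert.IH by blast
  have card: "card (insert x F) = Suc (card F)" using insert by auto
  have fresh: "\<forall>v\<in>F. L v \<noteq> Suc (card F)" using kgen_label_range[OF e] by fastforce
  have N: "finite N" "N \<subseteq> F" using insert.hyps unfolding N_def by auto
  obtain e' L' where e': "kgen (Suc (card F)) e' (insert x F) L'
        (EF \<union> Pair x ` N \<union> (\<lambda>y. (y, x)) ` N)"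
      and L': "L' x = Suc (card F)" "\<forall>v\<in>F. L' v = L v"
    using kgen_add_vertex[OF kgen_mono[OF e, of "Suc (card F)"] inj \<open>x \<notin> F\<close> _ _ fresh N]
    by auto
  have "(u, w) \<in> E \<longleftrightarrow> (u, w) \<in> EF \<union> Pair x ` N \<union> (\<lambda>y. (y, x)) ` N" for u w
    using insert.prems symD[OF insert.prems(2), of u w] symD[OF insert.prems(2), of w u]
      irreflD[OF insert.prems(3), of x]
    unfolding EF_def N_def by auto
  then have "EF \<union> Pair x ` N \<union> (\<lambda>y. (y, x)) ` N = E" by auto
  moreover have "inj_on L' (insert x F)"
    using inj_on_cong[of F L' L] inj L' fresh \<open>x \<notin> F\<close> by (auto simp: inj_on_insert)
  ultimately show ?case using e' card by (metis (no_types))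
qed

fun mexp_of_kexp :: "'a kexp \<Rightarrow> mexp" where
  "mexp_of_kexp (KAtom i v) = MAtom 1 {i}"
| "mexp_of_kexp (KEta i j e) = MEta i j (mexp_of_kexp e)"
| "mexp_of_kexp (KRho i j e) = MRho i {j} (mexp_of_kexp e)"
| "mexp_of_kexp (KUnion e1 e2) = MUnion (mexp_of_kexp e1) (mexp_of_kexp e2)"

lemma mgen_mexp_of_kexp:
  assumes "kgen k e V L E"
  shows "mgen k (mexp_of_kexp e) V (\<lambda>v. {L v}) E"
  using assms
proof induction
  case (katom i v)
  have "mgen k (MAtom 1 {i}) {v} (\<lambda>_. {i}) {}"
    by (rule matom) (use katom in auto)
  then show ?case by simp
next
  case (keta e V L E i j)
  have "mgen k (MEta i j (mexp_of_kexp e)) V (\<lambda>v. {L v})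
       (E \<union> {(u, w). u \<in> V \<and> w \<in> V \<and> ((i \<in> {L u} \<and> j \<in> {L w}) \<or> (j \<in> {L u} \<and> i \<in> {L w}))})"
    by (rule meta) (use keta in auto)
  then show ?case by (simp add: eq_commute[of i] eq_commute[of j])
next
  case (krho e V L E i j)
  have "mgen k (MRho i {j} (mexp_of_kexp e)) V
          (\<lambda>v. if i \<in> {L v} then ({L v} - {i}) \<union> {j} else {L v}) E"
    by (rule mrho) (use krho in auto)
  moreover have "(\<lambda>v. if i \<in> {L v} then ({L v} - {i}) \<union> {j} else {L v})
                 = (\<lambda>v. {if L v = i then j else L v})"
    by (auto simp: fun_eq_iff)
  ultimately show ?case by simp
next
  case (kunion e1 V1 L1 E1 e2 V2 L2 E2)
  have "mgen k (MUnion (mexp_of_kexp e1) (mexp_of_kexp e2)) (V1 \<union> V2)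
          (\<lambda>v. if v \<in> V1 then {L1 v} else {L2 v}) (E1 \<union> E2)"
    by (rule munion) (use kunion in auto)
  moreover have "(\<lambda>v. if v \<in> V1 then {L1 v} else {L2 v}) = (\<lambda>v. {if v \<in> V1 then L1 v else L2 v})"
    by (auto simp: fun_eq_iff)
  ultimately show ?case by simp
qed

lemma mgen_label_range:
  assumes "mgen k e V L E" "v \<in> V"
  shows "L v \<subseteq> {1..k}"
  using assms by induction auto

text \<open>A numbering \<open>enc\<close> of the label sets of a multi-k-expression by the labels
  \<open>1..2^k\<close>; a k-expression simulating it uses \<open>2 * 2^k\<close> labels, the upper half
  being scratch space for relabelling.\<close>

locale label_set_code =
  fixes k :: nat and enc :: "nat set \<Rightarrow> nat"
  assumes bij: "bij_betw enc (Pow {1..k}) {1..2 ^ k}"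
begin

definition dec :: "nat \<Rightarrow> nat set" where
  "dec = inv_into (Pow {1..k}) enc"

lemma enc_range: "X \<subseteq> {1..k} \<Longrightarrow> enc X \<in> {1..2 ^ k}"
  using bij_betw_apply[OF bij] by auto

lemma dec_enc: "X \<subseteq> {1..k} \<Longrightarrow> dec (enc X) = X"
  unfolding dec_def using bij_betw_inv_into_left[OF bij] by auto

lemma dec_range: "a \<in> {1..2 ^ k} \<Longrightarrow> dec a \<subseteq> {1..k}"
  unfolding dec_def using bij_betw_apply[OF bij_betw_inv_into[OF bij]] by auto

lemma kgen_recode:
  assumes "kgen (2 * 2 ^ k) e V L' E" "\<forall>v\<in>V. L v \<subseteq> {1..k} \<and> L' v = enc (L v)"
    "\<And>X. X \<subseteq> {1..k} \<Longrightarrow> g X \<subseteq> {1..k}"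
  shows "\<exists>e' L''. kgen (2 * 2 ^ k) e' V L'' E \<and> (\<forall>v\<in>V. L'' v = enc (g (L v)))"
proof -
  have "\<forall>a. 1 \<le> a \<and> a \<le> 2 ^ k \<longrightarrow> 1 \<le> enc (g (dec a)) \<and> enc (g (dec a)) \<le> 2 ^ k"
    using enc_range dec_range assms(3) by (metis atLeastAtMost_iff)
  moreover have "\<forall>v\<in>V. 1 \<le> L' v \<and> L' v \<le> 2 ^ k"
    using assms(2) enc_range by fastforce
  ultimately obtain e' L'' where "kgen (2 * 2 ^ k) e' V L'' E"
      "\<forall>v\<in>V. L'' v = enc (g (dec (L' v)))"
    using kgen_relabel[OF assms(1), of "2 ^ k" "\<lambda>a. enc (g (dec a))"] by auto
  then show ?thesis using assms(2) dec_enc by auto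
qed

lemma kgen_eta_code:
  assumes "kgen (2 * 2 ^ k) e V L' E" "\<forall>v\<in>V. L v \<subseteq> {1..k} \<and> L' v = enc (L v)"
    "\<forall>v\<in>V. \<not> (i \<in> L v \<and> j \<in> L v)"
  shows "\<exists>e'. kgen (2 * 2 ^ k) e' V L'
           (E \<union> {(u, w). u \<in> V \<and> w \<in> V \<and> ((i \<in> L u \<and> j \<in> L w) \<or> (j \<in> L u \<and> i \<in> L w))})"
proof -
  define P where
    "P = {(a, b). a \<in> {1..2 ^ k} \<and> b \<in> {1..2 ^ k} \<and> a \<noteq> b \<and> i \<in> dec a \<and> j \<in> dec b}"
  have "finite P" unfolding P_def
    by (rule finite_subset[of _ "{1..2 ^ k} \<times> {1..2 ^ k}"]) auto
  then obtain ps where ps: "set ps = P" using finite_list by blast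
  have "\<forall>(a, b)\<in>set ps. 1 \<le> a \<and> a \<le> 2 * 2 ^ k \<and> 1 \<le> b \<and> b \<le> 2 * 2 ^ k \<and> a \<noteq> b"
    unfolding ps P_def by auto
  note G = kgen_KEtas[OF assms(1) this]
  have "(u \<in> V \<and> w \<in> V \<and> ((L' u, L' w) \<in> set ps \<or> (L' w, L' u) \<in> set ps))
          \<longleftrightarrow> (u \<in> V \<and> w \<in> V \<and> ((i \<in> L u \<and> j \<in> L w) \<or> (j \<in> L u \<and> i \<in> L w)))" for u w
  proof (cases "u \<in> V \<and> w \<in> V")
    case True
    then have codes: "dec (L' u) = L u" "dec (L' w) = L w"
        "L' u \<in> {1..2 ^ k}" "L' w \<in> {1..2 ^ k}"
      using assms(2) dec_enc enc_range by auto
    \<comment> \<open>no label set contains both \<open>i\<close> and \<open>j\<close>, so such vertices carry distinct codes\<close>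
    have "(i \<in> L u \<and> j \<in> L w) \<or> (j \<in> L u \<and> i \<in> L w) \<Longrightarrow> L' u \<noteq> L' w"
      using codes(1,2) assms(3) True by metis
    then show ?thesis unfolding ps P_def using codes True by auto
  qed blast
  then have edges: "{(u, w). u \<in> V \<and> w \<in> V \<and> ((L' u, L' w) \<in> set ps \<or> (L' w, L' u) \<in> set ps)}
      = {(u, w). u \<in> V \<and> w \<in> V \<and> ((i \<in> L u \<and> j \<in> L w) \<or> (j \<in> L u \<and> i \<in> L w))}"
    unfolding set_eq_iff by (simp only: split_paired_All mem_Collect_eq prod.case simp_thms)
  show ?thesis using G unfolding edges by blast
qed

lemma kgen_of_mgen:
  assumes "mgen k e V L E"
  shows "\<exists>e' L'. kgen (2 * 2 ^ k) e' V L' E \<and> (\<forall>v\<in>V. L' v = enc (L v))"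
  using assms
proof induction
  case (matom m V S)
  then have "V \<noteq> {}" "1 \<le> enc S" "enc S \<le> 2 * 2 ^ k" using enc_range[of S] by auto
  then obtain e where "kgen (2 * 2 ^ k) e V (\<lambda>_. enc S) {}"
    using kgen_edgeless[OF \<open>finite V\<close>] by blast
  then show ?case by blast
next
  case (meta e V L E i j)
  obtain e' L' where "kgen (2 * 2 ^ k) e' V L' E" "\<forall>v\<in>V. L' v = enc (L v)"
    using meta.IH by blast
  moreover have "\<forall>v\<in>V. L v \<subseteq> {1..k}" using mgen_label_range[OF meta.hyps(1)] by blast
  ultimately show ?case using kgen_eta_code[OF _ _ meta.hyps(6)] by blast
next
  case (mrho e V L E i S)
  obtain e' L' where e': "kgen (2 * 2 ^ k) e' V L' E" "\<forall>v\<in>V. L' v = enc (L v)"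
    using mrho.IH by blast
  show ?case
    by (rule kgen_recode[OF e'(1)])
      (use e'(2) mgen_label_range[OF mrho.hyps(1)] mrho.hyps(4) in auto)
next
  case (meps e V L E i)
  obtain e' L' where e': "kgen (2 * 2 ^ k) e' V L' E" "\<forall>v\<in>V. L' v = enc (L v)"
    using meps.IH by blast
  show ?case
    by (rule kgen_recode[OF e'(1)]) (use e'(2) mgen_label_range[OF meps.hyps(1)] in auto)
next
  case (munion e1 V1 L1 E1 e2 V2 L2 E2)
  obtain e1' L1' where e1': "kgen (2 * 2 ^ k) e1' V1 L1' E1" "\<forall>v\<in>V1. L1' v = enc (L1 v)"
    using munion.IH(1) by blast
  obtain e2' L2' where e2': "kgen (2 * 2 ^ k) e2' V2 L2' E2" "\<forall>v\<in>V2. L2' v = enc (L2 v)"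
    using munion.IH(2) by blast
  have "kgen (2 * 2 ^ k) (KUnion e1' e2') (V1 \<union> V2)
      (\<lambda>v. if v \<in> V1 then L1' v else L2' v) (E1 \<union> E2)"
    using kunion[OF e1'(1) e2'(1) munion.hyps(3)] .
  then show ?case using e1'(2) e2'(2) by (intro exI) auto
qed

end

lemma cw_le:
  assumes "kgen k e (fst G) L (snd G)"
  shows "cw G \<le> k"
  unfolding cw_def by (rule Least_le) (use assms in blast)

lemma mcw_le:
  assumes "mgen k e (fst G) L (snd G)"
  shows "mcw G \<le> k"
  unfolding mcw_def by (rule Least_le) (use assms in blast)

lemma kgen_cw:
  assumes "finite_graph G" "fst G \<noteq> {}"
  obtains e L where "kgen (cw G) e (fst G) L (snd G)"
proof -
  have "\<exists>e L. kgen (card (fst G)) e (fst G) L (snd G)"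
    using kgen_exists assms unfolding finite_graph_def by blast
  then show ?thesis
    using LeastI[of "\<lambda>k. fst G = {} \<or> (\<exists>e L. kgen k e (fst G) L (snd G))"] assms(2) that
    unfolding cw_def by blast
qed

lemma mgen_mcw:
  assumes "finite_graph G" "fst G \<noteq> {}"
  obtains e L where "mgen (mcw G) e (fst G) L (snd G)"
proof -
  obtain e L where "kgen (cw G) e (fst G) L (snd G)" using kgen_cw[OF assms] .
  then have "\<exists>e L. mgen (cw G) e (fst G) L (snd G)" using mgen_mexp_of_kexp by blast
  then show ?thesis
    using LeastI[of "\<lambda>k. fst G = {} \<or> (\<exists>e L. mgen k e (fst G) L (snd G))"] assms(2) that
    unfolding mcw_def by blast
qed

lemma mcw_le_cw:
  assumes "finite_graph G"
  shows "mcw G \<le> cw G"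
proof (cases "fst G = {}")
  case True
  then show ?thesis unfolding mcw_def by simp
next
  case False
  then obtain e L where "kgen (cw G) e (fst G) L (snd G)" using kgen_cw[OF assms] by blast
  then show ?thesis using mcw_le mgen_mexp_of_kexp by blast
qed

lemma label_set_code_exists: "\<exists>enc. label_set_code k enc"
proof -
  have "card (Pow {1..k}) = card {1..(2::nat) ^ k}" by (simp add: card_Pow)
  then show ?thesis
    unfolding label_set_code_def by (meson finite_Pow_iff finite_atLeastAtMost finite_same_card_bij)
qed

lemma cw_le_mcw:
  assumes "finite_graph G"
  shows "cw G \<le> 2 * 2 ^ mcw G"
proof (cases "fst G = {}")
  case True
  then show ?thesis unfolding cw_def by simp
next
  case False
  obtain e L where "mgen (mcw G) e (fst G) L (snd G)" using mgen_mcw[OF assms False] .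
  moreover obtain enc where "label_set_code (mcw G) enc" using label_set_code_exists by blast
  ultimately obtain e' L' where "kgen (2 * 2 ^ mcw G) e' (fst G) L' (snd G)"
    using label_set_code.kgen_of_mgen by blast
  then show ?thesis by (rule cw_le)
qed

theorem mainTheorem3:
  fixes C :: "'a graph set"
  assumes "\<forall>G\<in>C. finite_graph G"
  shows "(\<exists>c::nat. \<forall>G\<in>C. cw G \<le> c) \<longleftrightarrow> (\<exists>c::nat. \<forall>G\<in>C. mcw G \<le> c)"
proof
  assume "\<exists>c::nat. \<forall>G\<in>C. cw G \<le> c"
  then obtain c where "\<forall>G\<in>C. cw G \<le> c" by blast
  then have "\<forall>G\<in>C. mcw G \<le> c" using mcw_le_cw assms le_trans by blast
  then show "\<exists>c::nat. \<forall>G\<in>C. mcw G \<le> c" by blast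
next
  assume "\<exists>c::nat. \<forall>G\<in>C. mcw G \<le> c"
  then obtain c where "\<forall>G\<in>C. mcw G \<le> c" by blast
  then have "\<forall>G\<in>C. cw G \<le> 2 * 2 ^ c"
    using cw_le_mcw assms by (meson le_trans mult_le_mono2 one_le_numeral power_increasing)
  then show "\<exists>c::nat. \<forall>G\<in>C. cw G \<le> c" by blast
qed

end
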